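(* In the setting below, every $p\in X$, written $p=\sum_{e_i\in S_p}\lambda_ie_i$ (normalized so that $\min_{e_i\in S_p}\lambda_i=1$), satisfies $\lambda_i=1$ for all $e_i\in S_p$ except for at most one index $j$, for which $\lambda_j>1$.
   Context: Setting: $E=\{e_0,\dots,e_n\}\subset\mathbb R^n$ is the vertex set of an $n$-simplex with $e_0+\cdots+e_n=0$, and $X\subset\mathbb R^n\setminus\{0\}$ is a finite set with $E\subseteq X$, no element of $X$ a positive multiple of another, such that every $n+1$ points of $X$ are in good position. (A finite set $A$ is in conical position if $0\notin\operatorname{conv}A$ and no point of $A$ lies in the positive hull—set of nonnegative linear combinations—of the other points; it is in good position otherwise.) For $p\in X$, the support $S_p$ is the minimal subset of $E$ whose positive hull contains $p$; then $p=\sum_{e_i\in S_p}\lambda_ie_i$ uniquely with all $\lambda_i>0$. Convention: each $p\in X$ is replaced by the positive multiple for which $\min_{e_i\in S_p}\lambda_i=1$ (this does not affect the hypotheses). *)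

theory Defs
  imports "HOL-Analysis.Analysis"
begin

definition pos_hull :: "'a::real_vector set \<Rightarrow> 'a set" where
  "pos_hull A = {(\<Sum>a\<in>A. c a *\<^sub>R a) | c. \<forall>a\<in>A. c a \<ge> 0}"

definition conical_position :: "'a::real_vector set \<Rightarrow> bool" where
  "conical_position A \<longleftrightarrow> finite A \<and> 0 \<notin> convex hull A \<and>
     (\<forall>a\<in>A. a \<notin> pos_hull (A - {a}))"

definition good_position :: "'a::real_vector set \<Rightarrow> bool" where
  "good_position A \<longleftrightarrow> \<not> conical_position A"

end

theory Submission
  imports Defs
begin

text \<open>Let \<open>\<lambda>\<^sub>k\<close> be a smallest coefficient of \<open>p\<close> and put \<open>\<lambda>\<^sub>i = 0\<close> off the support.
  As the vertices sum to zero, \<open>p = \<Sum>\<^bsub>i \<noteq> k\<^esub> (\<lambda>\<^sub>i - \<lambda>\<^sub>k) e\<^sub>i\<close>, and the vertices other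
  than \<open>e\<^sub>k\<close> form a basis. Minimality of the support forces a vertex \<open>e\<^sub>j\<close> outside it, where
  \<open>p\<close> has the negative coordinate \<open>-\<lambda>\<^sub>k\<close>. If two coefficients exceeded \<open>\<lambda>\<^sub>k\<close>, \<open>p\<close>
  would also have two positive coordinates, and then \<open>p\<close> together with this basis would be
  \<open>n + 1\<close> points of \<open>X\<close> in conical position: suitable combinations of two dual functionals
  separate each of these points from the others.\<close>

lemma notin_pos_hull_if_separated:
  fixes f :: "'a::real_vector \<Rightarrow> real"
  assumes "linear f" "f a > 0" "\<forall>b\<in>B. f b \<le> 0"
  shows "a \<notin> pos_hull B"
proof
  assume "a \<in> pos_hull B"
  then obtain c where c: "\<forall>b\<in>B. c b \<ge> 0" and a: "a = (\<Sum>b\<in>B. c b *\<^sub>R b)"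
    unfolding pos_hull_def by blast
  have "f a = (\<Sum>b\<in>B. c b * f b)"
    unfolding a by (simp add: linear_sum[OF assms(1)] linear_scale[OF assms(1)])
  also have "\<dots> \<le> 0"
    using c assms(3) by (intro sum_nonpos) (simp add: mult_nonneg_nonpos)
  finally show False using assms(2) by simp
qed

lemma zero_notin_convex_hull_if_separated:
  fixes A :: "'a::real_vector set"
  assumes "finite A" "\<forall>a\<in>A. \<exists>f::'a\<Rightarrow>real. linear f \<and> f a > 0 \<and> (\<forall>b\<in>A. f b \<ge> 0)"
  shows "0 \<notin> convex hull A"
proof
  assume "0 \<in> convex hull A"
  then obtain u where u: "\<forall>x\<in>A. 0 \<le> u x" "sum u A = 1" "(\<Sum>x\<in>A. u x *\<^sub>R x) = 0"
    using convex_hull_finite[OF assms(1)] by auto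
  have "u a = 0" if aA: "a \<in> A" for a
  proof -
    obtain f :: "'a\<Rightarrow>real" where f: "linear f" "f a > 0" "\<forall>b\<in>A. f b \<ge> 0"
      using assms(2) aA by blast
    have "(\<Sum>x\<in>A. u x * f x) = f (\<Sum>x\<in>A. u x *\<^sub>R x)"
      by (simp add: linear_sum[OF f(1)] linear_scale[OF f(1)])
    also have "\<dots> = 0" using u(3) linear_0[OF f(1)] by simp
    finally have "u a * f a \<le> 0"
      using member_le_sum[of a A "\<lambda>x. u x * f x"] aA u(1) f(3) assms(1) by simp
    then show "u a = 0" using u(1) aA f(2)
      by (metis less_eq_real_def mult_le_0_iff not_less)
  qed
  then show False using u(2) by simp
qed

lemma conical_positionI:
  fixes A :: "'a::real_vector set"
  assumes "finite A"
    and "\<forall>a\<in>A. \<exists>f::'a\<Rightarrow>real. linear f \<and> f a > 0 \<and> (\<forall>b\<in>A. f b \<ge> 0)"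
    and "\<forall>a\<in>A. \<exists>f::'a\<Rightarrow>real. linear f \<and> f a > 0 \<and> (\<forall>b\<in>A - {a}. f b \<le> 0)"
  shows "conical_position A"
  unfolding conical_position_def
  using assms zero_notin_convex_hull_if_separated notin_pos_hull_if_separated by metis

lemma sum_scaleR_in_pos_hull:
  assumes "inj_on b T" "\<forall>i\<in>T. c i \<ge> 0"
  shows "(\<Sum>i\<in>T. c i *\<^sub>R b i) \<in> pos_hull (b ` T)"
proof -
  have "(\<Sum>i\<in>T. c i *\<^sub>R b i) = (\<Sum>v\<in>b ` T. c (inv_into T b v) *\<^sub>R v)"
    using assms(1) by (simp add: sum.reindex)
  moreover have "\<forall>v\<in>b ` T. c (inv_into T b v) \<ge> 0"
    using assms by (auto simp: inv_into_f_f)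
  ultimately show ?thesis
    unfolding pos_hull_def by (intro CollectI exI[of _ "\<lambda>v. c (inv_into T b v)"]) simp
qed

lemma independent_remove_if_affine_independent:
  fixes E :: "'a::real_vector set"
  assumes "finite E" "\<not> affine_dependent E" "(\<Sum>v\<in>E. v) = 0" "a \<in> E"
  shows "independent (E - {a})"
proof
  assume "dependent (E - {a})"
  then obtain u where u: "\<exists>v\<in>E - {a}. u v \<noteq> 0" "(\<Sum>v\<in>E - {a}. u v *\<^sub>R v) = 0"
    using dependent_finite[of "E - {a}"] assms(1) by auto
  define s where "s = (\<Sum>v\<in>E - {a}. u v)"
  \<comment> \<open>Subtracting the average turns the linear dependency into an affine one, since the
    points of \<open>E\<close> sum to zero.\<close>
  define w where "w v = (if v = a then 0 else u v) - s / card E" for v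
  have cE: "card E > 0" using assms(1,4) card_gt_0_iff by blast
  have "sum w E = 0"
    using cE sum.remove[OF assms(1,4), of "\<lambda>v. if v = a then 0 else u v"]
    by (simp add: w_def s_def sum_subtractf)
  moreover have "(\<Sum>v\<in>E. w v *\<^sub>R v) = 0"
  proof -
    have "(\<Sum>v\<in>E. (if v = a then 0 else u v) *\<^sub>R v) = (\<Sum>v\<in>E - {a}. u v *\<^sub>R v)"
      using sum.remove[OF assms(1,4), of "\<lambda>v. (if v = a then 0 else u v) *\<^sub>R v"] by simp
    then show ?thesis
      using u(2) assms(3)
      by (simp add: w_def scaleR_diff_left sum_subtractf scaleR_sum_right[symmetric])
  qed
  moreover have "\<exists>v\<in>E. w v \<noteq> 0"
  proof (rule ccontr)
    assume "\<not> ?thesis"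
    then have w0: "\<forall>v\<in>E. w v = 0" by blast
    then have "w a = 0" using assms(4) by blast
    then have "s = 0" using cE by (simp add: w_def)
    with w0 have "\<forall>v\<in>E - {a}. u v = 0" by (auto simp: w_def split: if_splits)
    then show False using u(1) by blast
  qed
  ultimately show False
    using assms(1,2) affine_dependent_explicit_finite by blast
qed

lemma dual_basis_functionals:
  fixes b :: "'i \<Rightarrow> 'a::real_vector"
  assumes "independent (b ` I)" "inj_on b I"
  obtains \<phi> :: "'i \<Rightarrow> 'a \<Rightarrow> real"
  where "\<And>i. i \<in> I \<Longrightarrow> linear (\<phi> i)"
    and "\<And>i l. i \<in> I \<Longrightarrow> l \<in> I \<Longrightarrow> \<phi> i (b l) = (if l = i then 1 else 0)"
proof -
  have "\<forall>i\<in>I. \<exists>g::'a\<Rightarrow>real. linear g \<and> (\<forall>x\<in>b ` I. g x = (if x = b i then 1 else 0))"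
    by (intro ballI linear_independent_extend[OF assms(1)])
  then obtain \<phi> :: "'i \<Rightarrow> 'a \<Rightarrow> real" where
    \<phi>: "\<forall>i\<in>I. linear (\<phi> i) \<and> (\<forall>x\<in>b ` I. \<phi> i x = (if x = b i then 1 else 0))"
    by metis
  show thesis
  proof (rule that)
    show "linear (\<phi> i)" if "i \<in> I" for i using \<phi> that by blast
    show "\<phi> i (b l) = (if l = i then 1 else 0)" if "i \<in> I" "l \<in> I" for i l
      using \<phi> that assms(2) by (auto simp: inj_on_def)
  qed
qed

lemma dual_functional_sum_scaleR:
  assumes "finite I" "linear f" "i \<in> I" "\<And>l. l \<in> I \<Longrightarrow> f (b l) = (if l = i then 1 else 0)"
  shows "f (\<Sum>l\<in>I. c l *\<^sub>R b l) = c i"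
proof -
  have "f (\<Sum>l\<in>I. c l *\<^sub>R b l) = (\<Sum>l\<in>I. if l = i then c l else 0)"
    unfolding linear_sum[OF assms(2)] linear_scale[OF assms(2)]
    by (rule sum.cong) (simp_all add: assms(4))
  then show ?thesis using assms(1,3) by simp
qed

lemma linear_add_scaled:
  fixes f g :: "'a::real_vector \<Rightarrow> real"
  assumes "linear f" "linear g"
  shows "linear (\<lambda>x. f x + t * g x)"
  using linear_compose_add[OF assms(1) real_vector.linear_compose_scale_right[OF assms(2)]] by simp

context
  fixes I :: "'i set" and b :: "'i \<Rightarrow> 'a::real_vector" and \<phi> :: "'i \<Rightarrow> 'a \<Rightarrow> real"
    and q :: 'a and i0 :: 'i
  assumes lin: "\<And>i. i \<in> I \<Longrightarrow> linear (\<phi> i)"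
    and \<phi>_b: "\<And>i l. i \<in> I \<Longrightarrow> l \<in> I \<Longrightarrow> \<phi> i (b l) = (if l = i then 1 else 0)"
    and neg: "i0 \<in> I" "\<phi> i0 q < 0"
    and pos_elsewhere: "\<And>i. \<exists>j\<in>I. j \<noteq> i \<and> \<phi> j q > 0"
begin

lemma insert_dual_basis_nonneg_separation:
  assumes "a \<in> insert q (b ` I)"
  shows "\<exists>f::'a\<Rightarrow>real. linear f \<and> f a > 0 \<and> (\<forall>x\<in>insert q (b ` I). f x \<ge> 0)"
  using assms
proof
  assume a: "a = q"
  obtain j where j: "j \<in> I" "\<phi> j q > 0" using pos_elsewhere by blast
  have "\<forall>x\<in>insert q (b ` I). \<phi> j x \<ge> 0" using j \<phi>_b by auto
  then show ?thesis using a j lin by (intro exI[of _ "\<phi> j"]) simp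
next
  assume "a \<in> b ` I"
  then obtain i where i: "i \<in> I" "a = b i" by blast
  obtain j where j: "j \<in> I" "j \<noteq> i" "\<phi> j q > 0" using pos_elsewhere by blast
  define t where "t = max 0 (- \<phi> i q) / \<phi> j q"
  have "t \<ge> 0" "\<phi> i q + t * \<phi> j q \<ge> 0" using j(3) by (auto simp: t_def)
  then have "\<forall>x\<in>insert q (b ` I). \<phi> i x + t * \<phi> j x \<ge> 0"
    using i(1) j(1) \<phi>_b by auto
  moreover have "\<phi> i a + t * \<phi> j a > 0" using i j \<phi>_b by simp
  ultimately show ?thesis
    using linear_add_scaled[OF lin lin] i(1) j(1)
    by (intro exI[of _ "\<lambda>x. \<phi> i x + t * \<phi> j x"]) simp
qed

lemma insert_dual_basis_nonpos_separation:
  assumes "a \<in> insert q (b ` I)"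
  shows "\<exists>f::'a\<Rightarrow>real. linear f \<and> f a > 0 \<and> (\<forall>x\<in>insert q (b ` I) - {a}. f x \<le> 0)"
  using assms
proof
  assume a: "a = q"
  have "\<forall>x\<in>insert q (b ` I) - {a}. - \<phi> i0 x \<le> 0"
    using a neg(1) \<phi>_b by (auto split: if_splits)
  moreover have "- \<phi> i0 a > 0" using a neg by simp
  ultimately show ?thesis
    using real_vector.linear_compose_neg[OF lin[OF neg(1)]]
    by (intro exI[of _ "\<lambda>x. - \<phi> i0 x"]) simp
next
  assume "a \<in> b ` I"
  then obtain i where i: "i \<in> I" "a = b i" by blast
  obtain j where j: "j \<in> I" "j \<noteq> i" "\<phi> j q > 0" using pos_elsewhere by blast
  define t where "t = - max 0 (\<phi> i q) / \<phi> j q"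
  have "t \<le> 0" "\<phi> i q + t * \<phi> j q \<le> 0" using j(3) by (auto simp: t_def)
  then have "\<forall>x\<in>insert q (b ` I) - {a}. \<phi> i x + t * \<phi> j x \<le> 0"
    using i j(1) \<phi>_b by (auto split: if_splits)
  moreover have "\<phi> i a + t * \<phi> j a > 0" using i j \<phi>_b by simp
  ultimately show ?thesis
    using linear_add_scaled[OF lin lin] i(1) j(1)
    by (intro exI[of _ "\<lambda>x. \<phi> i x + t * \<phi> j x"]) simp
qed

lemma conical_position_insert_dual_basis:
  assumes "finite I"
  shows "conical_position (insert q (b ` I))"
  using assms insert_dual_basis_nonneg_separation insert_dual_basis_nonpos_separation
  by (intro conical_positionI) auto

end

lemma conical_position_insert_basis:
  fixes b :: "'i \<Rightarrow> 'a::real_vector" and c :: "'i \<Rightarrow> real"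
  assumes I: "finite I" "independent (b ` I)" "inj_on b I"
    and neg: "i0 \<in> I" "c i0 < 0"
    and pos: "j1 \<in> I" "j2 \<in> I" "j1 \<noteq> j2" "c j1 > 0" "c j2 > 0"
  shows "conical_position (insert (\<Sum>l\<in>I. c l *\<^sub>R b l) (b ` I))"
proof -
  obtain \<phi> :: "'i \<Rightarrow> 'a \<Rightarrow> real" where
    lin: "\<And>i. i \<in> I \<Longrightarrow> linear (\<phi> i)" and
    \<phi>_b: "\<And>i l. i \<in> I \<Longrightarrow> l \<in> I \<Longrightarrow> \<phi> i (b l) = (if l = i then 1 else 0)"
    using dual_basis_functionals[OF I(2,3)] by blast
  have \<phi>_sum: "\<phi> i (\<Sum>l\<in>I. c l *\<^sub>R b l) = c i" if "i \<in> I" for i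
    using dual_functional_sum_scaleR[OF I(1) lin that] \<phi>_b that by blast
  have "\<exists>j\<in>{j1, j2}. j \<noteq> i \<and> \<phi> j (\<Sum>l\<in>I. c l *\<^sub>R b l) > 0" for i
    using pos \<phi>_sum by auto
  then have "\<exists>j\<in>I. j \<noteq> i \<and> \<phi> j (\<Sum>l\<in>I. c l *\<^sub>R b l) > 0" for i
    using pos(1,2) by blast
  then show ?thesis
    using conical_position_insert_dual_basis[OF lin \<phi>_b neg(1) _ _ I(1)] neg \<phi>_sum by simp
qed

lemma sum_scaleR_notin_basis:
  fixes b :: "'i \<Rightarrow> 'a::real_vector" and c :: "'i \<Rightarrow> real"
  assumes I: "finite I" "independent (b ` I)" "inj_on b I"
    and two: "j1 \<in> I" "j2 \<in> I" "j1 \<noteq> j2" "c j1 \<noteq> 0" "c j2 \<noteq> 0"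
  shows "(\<Sum>l\<in>I. c l *\<^sub>R b l) \<notin> b ` I"
proof
  assume "(\<Sum>l\<in>I. c l *\<^sub>R b l) \<in> b ` I"
  then obtain i where i: "i \<in> I" "(\<Sum>l\<in>I. c l *\<^sub>R b l) = b i" by auto
  obtain \<phi> :: "'i \<Rightarrow> 'a \<Rightarrow> real" where
    lin: "\<And>i. i \<in> I \<Longrightarrow> linear (\<phi> i)" and
    \<phi>_b: "\<And>i l. i \<in> I \<Longrightarrow> l \<in> I \<Longrightarrow> \<phi> i (b l) = (if l = i then 1 else 0)"
    using dual_basis_functionals[OF I(2,3)] by blast
  have "c j = (if i = j then 1 else 0)" if "j \<in> I" for j
    using dual_functional_sum_scaleR[OF I(1) lin[OF that] that, of b c] \<phi>_b[OF that] i by simp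
  then show False using two by (metis (full_types))
qed

lemma sum_scaleR_extend_zero:
  fixes e :: "'i \<Rightarrow> 'a::real_vector"
  assumes "finite A" "S \<subseteq> A"
  shows "(\<Sum>i\<in>S. c i *\<^sub>R e i) = (\<Sum>i\<in>A. (if i \<in> S then c i else 0) *\<^sub>R e i)"
  by (rule sum.mono_neutral_cong_left[OF assms]) auto

lemma sum_scaleR_eq_remove_vertex:
  fixes e :: "'i \<Rightarrow> 'a::real_vector"
  assumes "finite A" "(\<Sum>i\<in>A. e i) = 0" "k \<in> A"
  shows "(\<Sum>i\<in>A. c i *\<^sub>R e i) = (\<Sum>i\<in>A - {k}. (c i - c k) *\<^sub>R e i)"
proof -
  have "(\<Sum>i\<in>A. c i *\<^sub>R e i) = (\<Sum>i\<in>A. (c i - c k) *\<^sub>R e i)"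
    using assms(2) by (simp add: scaleR_diff_left sum_subtractf scaleR_sum_right[symmetric])
  also have "\<dots> = (\<Sum>i\<in>A - {k}. (c i - c k) *\<^sub>R e i)"
    using sum.remove[OF assms(1,3), of "\<lambda>i. (c i - c k) *\<^sub>R e i"] by simp
  finally show ?thesis .
qed

lemma sum_scaleR_in_pos_hull_remove_min:
  fixes e :: "'i \<Rightarrow> 'a::real_vector"
  assumes "finite A" "inj_on e A" "(\<Sum>i\<in>A. e i) = 0" "k \<in> A" "\<forall>i\<in>A. c i \<ge> c k"
  shows "(\<Sum>i\<in>A. c i *\<^sub>R e i) \<in> pos_hull (e ` (A - {k}))"
  unfolding sum_scaleR_eq_remove_vertex[OF assms(1,3,4)]
  using assms(2,5) by (intro sum_scaleR_in_pos_hull) (auto intro: inj_on_subset)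

lemma independent_simplex_remove_vertex:
  fixes e :: "'i \<Rightarrow> 'a::real_vector"
  assumes "finite A" "inj_on e A" "\<not> affine_dependent (e ` A)" "(\<Sum>i\<in>A. e i) = 0" "k \<in> A"
  shows "independent (e ` (A - {k}))"
proof -
  have "e ` (A - {k}) = e ` A - {e k}"
    using assms(2,5) by (auto simp: inj_on_def)
  moreover have "(\<Sum>v\<in>e ` A. v) = 0"
    using assms(2,4) by (simp add: sum.reindex)
  ultimately show ?thesis
    using independent_remove_if_affine_independent[of "e ` A" "e k"] assms(1,3,5) by simp
qed

lemma card_coefficients_above_min_le_1:
  fixes e :: "nat \<Rightarrow> 'a::real_vector"
  assumes simplex_inj: "inj_on e {0..n}"
    and simplex_indep: "\<not> affine_dependent (e ` {0..n})"
    and sum_zero: "(\<Sum>i=0..n. e i) = 0"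
    and E_sub: "e ` {0..n} \<subseteq> X"
    and good: "\<forall>A\<subseteq>X. card A = n + 1 \<longrightarrow> good_position A"
    and p_in: "p \<in> X"
    and S_sub: "S \<subseteq> {0..n}"
    and S_min: "\<forall>T. T \<subset> S \<longrightarrow> p \<notin> pos_hull (e ` T)"
    and lam_rep: "p = (\<Sum>i\<in>S. lam i *\<^sub>R e i)"
    and k: "k \<in> S" "\<forall>i\<in>S. lam i \<ge> lam k" "lam k > 0"
  shows "card {i\<in>S. lam i > lam k} \<le> 1"
proof (rule ccontr)
  assume "\<not> ?thesis"
  moreover have "finite S" using S_sub finite_subset by blast
  ultimately obtain j1 j2 where j: "j1 \<in> S" "j2 \<in> S" "j1 \<noteq> j2" "lam j1 > lam k" "lam j2 > lam k"
    using card_le_Suc0_iff_eq[of "{i\<in>S. lam i > lam k}"] by auto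
  have k_n: "k \<in> {0..n}" using k(1) S_sub by auto
  obtain i0 where i0: "i0 \<in> {0..n}" "i0 \<notin> S"
  proof (rule ccontr)
    assume "\<not> thesis"
    then have "S = {0..n}" using that S_sub by blast
    then have "p \<in> pos_hull (e ` (S - {k}))"
      using sum_scaleR_in_pos_hull_remove_min[of S e k lam] lam_rep simplex_inj sum_zero k by simp
    then show False using S_min k(1) by blast
  qed
  define I where "I = {0..n} - {k}"
  define c where "c l = (if l \<in> S then lam l else 0) - lam k" for l
  have "p = (\<Sum>l\<in>{0..n}. (if l \<in> S then lam l else 0) *\<^sub>R e l)"
    unfolding lam_rep by (rule sum_scaleR_extend_zero[OF _ S_sub]) simp
  also have "\<dots> = (\<Sum>l\<in>I. c l *\<^sub>R e l)"
    unfolding sum_scaleR_eq_remove_vertex[OF _ sum_zero k_n, simplified] I_def c_def using k(1) by simp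
  finally have p_I: "p = (\<Sum>l\<in>I. c l *\<^sub>R e l)" .
  have I: "finite I" "independent (e ` I)" "inj_on e I"
    unfolding I_def
    using inj_on_subset[OF simplex_inj]
      independent_simplex_remove_vertex[OF _ simplex_inj simplex_indep sum_zero k_n]
    by auto
  have in_I: "i0 \<in> I" "j1 \<in> I" "j2 \<in> I" using i0 j S_sub k(1) unfolding I_def by auto
  have c: "c i0 < 0" "c j1 > 0" "c j2 > 0" using i0 j k(3) unfolding c_def by auto
  have "conical_position (insert p (e ` I))"
    unfolding p_I using conical_position_insert_basis[OF I in_I(1) c(1) in_I(2,3) j(3) c(2,3)] .
  moreover have "card (insert p (e ` I)) = n + 1"
    using sum_scaleR_notin_basis[OF I in_I(2,3) j(3)] c k_n I(3) unfolding p_I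
    by (simp add: card_image I_def)
  moreover have "insert p (e ` I) \<subseteq> X" using p_in E_sub unfolding I_def by auto
  ultimately show False using good unfolding good_position_def by blast
qed

theorem proposition6p1:
  fixes e :: "nat \<Rightarrow> 'a::euclidean_space" and X :: "'a set" and p :: "'a"
    and S :: "nat set" and lam mu :: "nat \<Rightarrow> real"
  defines "n \<equiv> DIM('a)"
  assumes simplex_inj: "inj_on e {0..n}"
    and simplex_indep: "\<not> affine_dependent (e ` {0..n})"
    and sum_zero: "(\<Sum>i=0..n. e i) = 0"
    and X_fin: "finite X"
    and X_nz: "0 \<notin> X"
    and E_sub: "e ` {0..n} \<subseteq> X"
    and no_pos_mult: "\<forall>p\<in>X. \<forall>q\<in>X. p \<noteq> q \<longrightarrow> \<not> (\<exists>c>0. p = c *\<^sub>R q)"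
    and good: "\<forall>A\<subseteq>X. card A = n + 1 \<longrightarrow> good_position A"
    and p_in: "p \<in> X"
    and S_sub: "S \<subseteq> {0..n}"
    and S_supp: "p \<in> pos_hull (e ` S)"
    and S_min: "\<forall>T. T \<subset> S \<longrightarrow> p \<notin> pos_hull (e ` T)"
    and lam_pos: "\<forall>i\<in>S. lam i > (0::real)"
    and lam_rep: "p = (\<Sum>i\<in>S. lam i *\<^sub>R e i)"
    and mu_def: "\<forall>i\<in>S. mu i = lam i / Min (lam ` S)"
  shows "card {i\<in>S. mu i \<noteq> 1} \<le> 1 \<and> (\<forall>j\<in>S. mu j \<noteq> 1 \<longrightarrow> mu j > 1)"
proof -
  have finS: "finite S" using S_sub finite_subset by blast
  have "S \<noteq> {}" using lam_rep p_in X_nz by auto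
  define m where "m = Min (lam ` S)"
  have "m \<in> lam ` S" unfolding m_def using finS \<open>S \<noteq> {}\<close> by simp
  then obtain k where k: "k \<in> S" "lam k = m" by blast
  have lam_ge: "\<forall>i\<in>S. lam i \<ge> lam k" unfolding k(2) m_def using finS by auto
  have m_pos: "m > 0" using lam_pos k by auto
  have mu_ne_1: "mu j \<noteq> 1 \<longleftrightarrow> lam j > m" and mu_ge_1: "mu j \<ge> 1" if "j \<in> S" for j
    using mu_def lam_ge k(2) m_pos that unfolding m_def[symmetric] by (auto simp: less_eq_real_def)
  have "{i\<in>S. mu i \<noteq> 1} = {i\<in>S. lam i > m}" using mu_ne_1 by blast
  moreover have "card {i\<in>S. lam i > m} \<le> 1"
    using card_coefficients_above_min_le_1[OF simplex_inj simplex_indep sum_zero E_sub good p_in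
        S_sub S_min lam_rep k(1) lam_ge] m_pos k(2) by simp
  ultimately show ?thesis using mu_ge_1 by force
qed

end
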